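(* Let $C$ be a set and $\mathsf{D}$ a category. (i) Suppose given an object $F_{\mathrm{nil}}\in\mathsf{D}$, for every $c\in C$ an endofunctor $\gamma_c:\mathsf{D}\to\mathsf{D}$, and for all $a,b\in C$ a natural isomorphism $\tau_{a,b}:\gamma_a\gamma_b\xrightarrow{\sim}\gamma_b\gamma_a$, such that $\tau_{a,b}\tau_{b,a}=\mathrm{Id}$ for all $a,b$, and such that for all $a,b,c\in C$ the two composites $\gamma_a\gamma_b\gamma_c\to\gamma_c\gamma_b\gamma_a$ given by $(\tau_{b,c}\cdot\gamma_a)\circ(\gamma_b\cdot\tau_{a,c})\circ(\tau_{a,b}\cdot\gamma_c)$ and $(\gamma_c\cdot\tau_{a,b})\circ(\tau_{a,c}\cdot\gamma_b)\circ(\gamma_a\cdot\tau_{b,c})$ are equal. Then there is a functor $F:\mathrm{SList}(C)\to\mathsf{D}$ equipped with isomorphisms $\upsilon_{\mathrm{nil}}:F([\,])\simeq F_{\mathrm{nil}}$ and, for each $c\in C$, natural isomorphisms $\upsilon_{\mathrm{cons},c}:F\circ(c::-)\simeq\gamma_c\circ F$, such that $F(\mathrm{sw}_{a,b,l})$ is identified with $(\tau_{a,b})_{F(l)}$ through these isomorphisms. (ii) Let $F,G:\mathrm{SList}(C)\to\mathsf{D}$ be functors. Suppose given a morphism $\phi_{\mathrm{nil}}:F([\,])\to G([\,])$ and, for every $c\in C$, $l\in\mathrm{SList}(C)$ and morphism $\mathrm{ind}:F(l)\to G(l)$, a morphism $\phi_{c,l}(\mathrm{ind}):F(c::l)\to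 G(c::l)$, such that: for all $a,b\in C$, $l$, and $\mathrm{ind}:F(l)\to G(l)$, one has $G(\mathrm{sw}_{a,b,l})\circ\phi_{a,b::l}(\phi_{b,l}(\mathrm{ind}))=\phi_{b,a::l}(\phi_{a,l}(\mathrm{ind}))\circ F(\mathrm{sw}_{a,b,l})$; and for all $c\in C$, morphisms $f:l\to l'$ in $\mathrm{SList}(C)$ and morphisms $\mathrm{ind}_l:F(l)\to G(l)$, $\mathrm{ind}_{l'}:F(l')\to G(l')$ with $\mathrm{ind}_{l'}\circ F(f)=G(f)\circ\mathrm{ind}_l$, one has $\phi_{c,l'}(\mathrm{ind}_{l'})\circ F(c::_mf)=G(c::_mf)\circ\phi_{c,l}(\mathrm{ind}_l)$. Then there is a unique natural transformation $\phi:F\to G$ such that $\phi_{[\,]}=\phi_{\mathrm{nil}}$ and $\phi_{c::l}=\phi_{c,l}(\phi_l)$ for all $c,l$.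
   Context: For a set $C$, the category of symmetric lists $\mathrm{SList}(C)$ is the category presented by generators and relations as follows. Objects are finite lists of elements of $C$ (with $[\,]$ the empty list and $c::l$ the list with head $c$ and tail $l$). Morphisms are generated by: for all $a,b\in C$ and lists $l$, a morphism $\mathrm{sw}_{a,b,l}:a::b::l\to b::a::l$; and for every morphism $f:l\to l'$ and $x\in C$, a morphism $x::_mf:x::l\to x::l'$. Relations: $f\mapsto x::_mf$ respects composition and identities (so $x::-$ is a functor); $\mathrm{sw}_{a,b,l}$ is natural in $l$; $\mathrm{sw}_{b,a,l}\circ\mathrm{sw}_{a,b,l}=\mathrm{Id}_{a::b::l}$; and for all $a,b,c,l$, $\mathrm{sw}_{b,c,a::l}\circ(b::_m\mathrm{sw}_{a,c,l})\circ\mathrm{sw}_{a,b,c::l}=(c::_m\mathrm{sw}_{a,b,l})\circ\mathrm{sw}_{a,c,b::l}\circ(a::_m\mathrm{sw}_{b,c,l})$. In (i), $\gamma_b\cdot\tau$ and $\tau\cdot\gamma_c$ denote whiskerings. *)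

theory Defs
  imports Main
begin

record ('o, 'm) category =
  Ob :: "'o set"
  Mor :: "'m set"
  Dom :: "'m \<Rightarrow> 'o"
  Cod :: "'m \<Rightarrow> 'o"
  Comp :: "'m \<Rightarrow> 'm \<Rightarrow> 'm"   (* Comp g f = g o f *)
  Ident :: "'o \<Rightarrow> 'm"

definition hom :: "('o, 'm) category \<Rightarrow> 'o \<Rightarrow> 'o \<Rightarrow> 'm set" where
  "hom D a b = {f \<in> Mor D. Dom D f = a \<and> Cod D f = b}"

definition is_category :: "('o, 'm) category \<Rightarrow> bool" where
  "is_category D \<longleftrightarrow>
     (\<forall>a\<in>Ob D. Ident D a \<in> hom D a a) \<and>
     (\<forall>f\<in>Mor D. Dom D f \<in> Ob D \<and> Cod D f \<in> Ob D) \<and>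
     (\<forall>f\<in>Mor D. \<forall>g\<in>Mor D. Cod D f = Dom D g \<longrightarrow>
         Comp D g f \<in> hom D (Dom D f) (Cod D g)) \<and>
     (\<forall>f\<in>Mor D. Comp D (Ident D (Cod D f)) f = f \<and> Comp D f (Ident D (Dom D f)) = f) \<and>
     (\<forall>f\<in>Mor D. \<forall>g\<in>Mor D. \<forall>h\<in>Mor D. Cod D f = Dom D g \<longrightarrow> Cod D g = Dom D h \<longrightarrow>
         Comp D h (Comp D g f) = Comp D (Comp D h g) f)"

definition is_iso :: "('o, 'm) category \<Rightarrow> 'm \<Rightarrow> bool" where
  "is_iso D f \<longleftrightarrow> f \<in> Mor D \<and>
     (\<exists>g \<in> hom D (Cod D f) (Dom D f).
        Comp D g f = Ident D (Dom D f) \<and> Comp D f g = Ident D (Cod D f))"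

definition is_endofunctor :: "('o, 'm) category \<Rightarrow> ('o \<Rightarrow> 'o) \<Rightarrow> ('m \<Rightarrow> 'm) \<Rightarrow> bool" where
  "is_endofunctor D Go Gm \<longleftrightarrow>
     (\<forall>a\<in>Ob D. Go a \<in> Ob D) \<and>
     (\<forall>f\<in>Mor D. Gm f \<in> hom D (Go (Dom D f)) (Go (Cod D f))) \<and>
     (\<forall>a\<in>Ob D. Gm (Ident D a) = Ident D (Go a)) \<and>
     (\<forall>f\<in>Mor D. \<forall>g\<in>Mor D. Cod D f = Dom D g \<longrightarrow> Gm (Comp D g f) = Comp D (Gm g) (Gm f))"

definition is_nat_iso_endo ::
  "('o, 'm) category \<Rightarrow> ('o \<Rightarrow> 'o) \<Rightarrow> ('m \<Rightarrow> 'm) \<Rightarrow> ('o \<Rightarrow> 'o) \<Rightarrow> ('m \<Rightarrow> 'm) \<Rightarrow> ('o \<Rightarrow> 'm) \<Rightarrow> bool" where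
  "is_nat_iso_endo D Fo Fm Go Gm \<eta> \<longleftrightarrow>
     (\<forall>X\<in>Ob D. \<eta> X \<in> hom D (Fo X) (Go X) \<and> is_iso D (\<eta> X)) \<and>
     (\<forall>f\<in>Mor D. Comp D (\<eta> (Cod D f)) (Fm f) = Comp D (Gm f) (\<eta> (Dom D f)))"

text \<open>Formal morphism expressions: identities, swaps sw_{a,b,l}, x ::_m f,
  and composition (MComp g f = g o f).\<close>
datatype 'c mterm =
    MId "'c list"
  | MSw 'c 'c "'c list"
  | MCons 'c "'c mterm"
  | MComp "'c mterm" "'c mterm"

inductive mwt :: "'c set \<Rightarrow> 'c mterm \<Rightarrow> 'c list \<Rightarrow> 'c list \<Rightarrow> bool" for C where
  wt_id: "set l \<subseteq> C \<Longrightarrow> mwt C (MId l) l l"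
| wt_sw: "a \<in> C \<Longrightarrow> b \<in> C \<Longrightarrow> set l \<subseteq> C \<Longrightarrow> mwt C (MSw a b l) (a # b # l) (b # a # l)"
| wt_cons: "x \<in> C \<Longrightarrow> mwt C f l l' \<Longrightarrow> mwt C (MCons x f) (x # l) (x # l')"
| wt_comp: "mwt C f l1 l2 \<Longrightarrow> mwt C g l2 l3 \<Longrightarrow> mwt C (MComp g f) l1 l3"

inductive meq :: "'c set \<Rightarrow> 'c mterm \<Rightarrow> 'c mterm \<Rightarrow> bool" for C where
  eq_refl: "mwt C f l l' \<Longrightarrow> meq C f f"
| eq_sym: "meq C f g \<Longrightarrow> meq C g f"
| eq_trans: "meq C f g \<Longrightarrow> meq C g h \<Longrightarrow> meq C f h"
| eq_comp: "meq C f f' \<Longrightarrow> meq C g g' \<Longrightarrow> mwt C f l1 l2 \<Longrightarrow> mwt C g l2 l3 \<Longrightarrow>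
    meq C (MComp g f) (MComp g' f')"
| eq_cons: "x \<in> C \<Longrightarrow> meq C f f' \<Longrightarrow> meq C (MCons x f) (MCons x f')"
| eq_idl: "mwt C f l l' \<Longrightarrow> meq C (MComp (MId l') f) f"
| eq_idr: "mwt C f l l' \<Longrightarrow> meq C (MComp f (MId l)) f"
| eq_assoc: "mwt C f l1 l2 \<Longrightarrow> mwt C g l2 l3 \<Longrightarrow> mwt C h l3 l4 \<Longrightarrow>
    meq C (MComp h (MComp g f)) (MComp (MComp h g) f)"
| eq_cons_id: "x \<in> C \<Longrightarrow> set l \<subseteq> C \<Longrightarrow> meq C (MCons x (MId l)) (MId (x # l))"
| eq_cons_comp: "x \<in> C \<Longrightarrow> mwt C f l1 l2 \<Longrightarrow> mwt C g l2 l3 \<Longrightarrow>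
    meq C (MCons x (MComp g f)) (MComp (MCons x g) (MCons x f))"
| eq_sw_nat: "a \<in> C \<Longrightarrow> b \<in> C \<Longrightarrow> mwt C f l l' \<Longrightarrow>
    meq C (MComp (MSw a b l') (MCons a (MCons b f))) (MComp (MCons b (MCons a f)) (MSw a b l))"
| eq_sw_inv: "a \<in> C \<Longrightarrow> b \<in> C \<Longrightarrow> set l \<subseteq> C \<Longrightarrow>
    meq C (MComp (MSw b a l) (MSw a b l)) (MId (a # b # l))"
| eq_ybe: "a \<in> C \<Longrightarrow> b \<in> C \<Longrightarrow> c \<in> C \<Longrightarrow> set l \<subseteq> C \<Longrightarrow>
    meq C (MComp (MSw b c (a # l)) (MComp (MCons b (MSw a c l)) (MSw a b (c # l))))
          (MComp (MCons c (MSw a b l)) (MComp (MSw a c (b # l)) (MCons a (MSw b c l))))"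

text \<open>A functor SList(C) -> D: object map on lists over C, and a map on morphism
  expressions that is invariant under the congruence (hence a map on the
  morphisms of the presented category) and preserves identities and composition.\<close>
definition is_slist_functor ::
  "'c set \<Rightarrow> ('o, 'm) category \<Rightarrow> ('c list \<Rightarrow> 'o) \<Rightarrow> ('c mterm \<Rightarrow> 'm) \<Rightarrow> bool" where
  "is_slist_functor C D Fo Fm \<longleftrightarrow>
     (\<forall>l. set l \<subseteq> C \<longrightarrow> Fo l \<in> Ob D) \<and>
     (\<forall>f l l'. mwt C f l l' \<longrightarrow> Fm f \<in> hom D (Fo l) (Fo l')) \<and>
     (\<forall>f g. meq C f g \<longrightarrow> Fm f = Fm g) \<and>
     (\<forall>l. set l \<subseteq> C \<longrightarrow> Fm (MId l) = Ident D (Fo l)) \<and>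
     (\<forall>f g l1 l2 l3. mwt C f l1 l2 \<longrightarrow> mwt C g l2 l3 \<longrightarrow>
        Fm (MComp g f) = Comp D (Fm g) (Fm f))"

definition is_slist_nat_trans ::
  "'c set \<Rightarrow> ('o, 'm) category \<Rightarrow> ('c list \<Rightarrow> 'o) \<Rightarrow> ('c mterm \<Rightarrow> 'm) \<Rightarrow>
   ('c list \<Rightarrow> 'o) \<Rightarrow> ('c mterm \<Rightarrow> 'm) \<Rightarrow> ('c list \<Rightarrow> 'm) \<Rightarrow> bool" where
  "is_slist_nat_trans C D Fo Fm Go Gm \<phi> \<longleftrightarrow>
     (\<forall>l. set l \<subseteq> C \<longrightarrow> \<phi> l \<in> hom D (Fo l) (Go l)) \<and>
     (\<forall>f l l'. mwt C f l l' \<longrightarrow> Comp D (\<phi> l') (Fm f) = Comp D (Gm f) (\<phi> l))"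

end

theory Submission
  imports Defs
begin

text \<open>SList(C) is presented by generators and relations, so a functor out of it is an
  assignment on generators that respects the relations. For (i), send a list to the iterated
  action of the \<open>\<gamma>\<close>'s on \<open>Fnil\<close>, a swap to the matching component of \<open>\<tau>\<close>, and
  \<open>c ::\<^sub>m f\<close> to \<open>\<gamma>\<^sub>c f\<close>: the relations of SList(C) then become exactly functoriality of
  the \<open>\<gamma>\<^sub>c\<close> and naturality, symmetry and the braid relation of \<open>\<tau>\<close>, and all comparison
  isomorphisms \<open>\<upsilon>\<close> can be taken to be identities. For (ii), the required equations
  determine the components by recursion on the list, which gives uniqueness; naturality only
  has to be checked on the generators, since naturality squares of identities commute and
  those of composites paste.\<close>

lemma category_Ident_hom: "is_category D \<Longrightarrow> a \<in> Ob D \<Longrightarrow> Ident D a \<in> hom D a a"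
  by (simp add: is_category_def)

lemma category_comp_hom:
  "is_category D \<Longrightarrow> f \<in> hom D a b \<Longrightarrow> g \<in> hom D b c \<Longrightarrow> Comp D g f \<in> hom D a c"
  by (auto simp: is_category_def hom_def)

lemma category_comp_Ident_left: "is_category D \<Longrightarrow> f \<in> hom D a b \<Longrightarrow> Comp D (Ident D b) f = f"
  by (auto simp: is_category_def hom_def)

lemma category_comp_Ident_right: "is_category D \<Longrightarrow> f \<in> hom D a b \<Longrightarrow> Comp D f (Ident D a) = f"
  by (auto simp: is_category_def hom_def)

lemma category_comp_assoc:
  "is_category D \<Longrightarrow> f \<in> hom D a b \<Longrightarrow> g \<in> hom D b c \<Longrightarrow> h \<in> hom D c d \<Longrightarrow>
   Comp D h (Comp D g f) = Comp D (Comp D h g) f"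
  by (auto simp: is_category_def hom_def)

lemma is_iso_Ident:
  assumes D: "is_category D" and a: "a \<in> Ob D"
  shows "is_iso D (Ident D a)"
proof -
  have id: "Ident D a \<in> hom D a a"
    using category_Ident_hom[OF D a] .
  then have "Comp D (Ident D a) (Ident D a) = Ident D a"
    by (rule category_comp_Ident_left[OF D])
  with id show ?thesis
    unfolding is_iso_def hom_def by auto
qed

lemma comp_comm_squares:
  assumes D: "is_category D"
    and f: "f \<in> hom D A1 A2" and g: "g \<in> hom D A2 A3"
    and f': "f' \<in> hom D B1 B2" and g': "g' \<in> hom D B2 B3"
    and p1: "p1 \<in> hom D A1 B1" and p2: "p2 \<in> hom D A2 B2" and p3: "p3 \<in> hom D A3 B3"
    and square_f: "Comp D p2 f = Comp D f' p1" and square_g: "Comp D p3 g = Comp D g' p2"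
  shows "Comp D p3 (Comp D g f) = Comp D (Comp D g' f') p1"
proof -
  have "Comp D p3 (Comp D g f) = Comp D (Comp D g' p2) f"
    using category_comp_assoc[OF D f g p3] square_g by simp
  also have "\<dots> = Comp D g' (Comp D f' p1)"
    using category_comp_assoc[OF D f p2 g'] square_f by simp
  also have "\<dots> = Comp D (Comp D g' f') p1"
    using category_comp_assoc[OF D p1 f' g'] .
  finally show ?thesis .
qed

lemma endofunctor_Ob: "is_endofunctor D Go Gm \<Longrightarrow> a \<in> Ob D \<Longrightarrow> Go a \<in> Ob D"
  by (simp add: is_endofunctor_def)

lemma endofunctor_hom:
  "is_endofunctor D Go Gm \<Longrightarrow> f \<in> hom D a b \<Longrightarrow> Gm f \<in> hom D (Go a) (Go b)"
  by (auto simp: is_endofunctor_def hom_def)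

lemma endofunctor_Ident: "is_endofunctor D Go Gm \<Longrightarrow> a \<in> Ob D \<Longrightarrow> Gm (Ident D a) = Ident D (Go a)"
  by (simp add: is_endofunctor_def)

lemma endofunctor_comp:
  "is_endofunctor D Go Gm \<Longrightarrow> f \<in> hom D a b \<Longrightarrow> g \<in> hom D b c \<Longrightarrow>
   Gm (Comp D g f) = Comp D (Gm g) (Gm f)"
  by (auto simp: is_endofunctor_def hom_def)

lemma mwt_set: "mwt C f l l' \<Longrightarrow> set l \<subseteq> C \<and> set l' \<subseteq> C"
  by (induction rule: mwt.induct) auto

lemma slist_functor_hom: "is_slist_functor C D Fo Fm \<Longrightarrow> mwt C f l l' \<Longrightarrow> Fm f \<in> hom D (Fo l) (Fo l')"
  by (simp add: is_slist_functor_def)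

lemma slist_functor_MId: "is_slist_functor C D Fo Fm \<Longrightarrow> set l \<subseteq> C \<Longrightarrow> Fm (MId l) = Ident D (Fo l)"
  by (simp add: is_slist_functor_def)

lemma slist_functor_MComp:
  "is_slist_functor C D Fo Fm \<Longrightarrow> mwt C f l1 l2 \<Longrightarrow> mwt C g l2 l3 \<Longrightarrow>
   Fm (MComp g f) = Comp D (Fm g) (Fm f)"
  unfolding is_slist_functor_def by blast

lemma slist_nat_trans_from_generators:
  assumes D: "is_category D"
    and F: "is_slist_functor C D Fo Fm" and G: "is_slist_functor C D Go Gm"
    and \<phi>_hom: "\<And>l. set l \<subseteq> C \<Longrightarrow> \<phi> l \<in> hom D (Fo l) (Go l)"
    and \<phi>_MSw: "\<And>a b l. a \<in> C \<Longrightarrow> b \<in> C \<Longrightarrow> set l \<subseteq> C \<Longrightarrow>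
       Comp D (\<phi> (b # a # l)) (Fm (MSw a b l)) = Comp D (Gm (MSw a b l)) (\<phi> (a # b # l))"
    and \<phi>_MCons: "\<And>x f l l'. x \<in> C \<Longrightarrow> mwt C f l l' \<Longrightarrow>
       Comp D (\<phi> l') (Fm f) = Comp D (Gm f) (\<phi> l) \<Longrightarrow>
       Comp D (\<phi> (x # l')) (Fm (MCons x f)) = Comp D (Gm (MCons x f)) (\<phi> (x # l))"
  shows "is_slist_nat_trans C D Fo Fm Go Gm \<phi>"
proof -
  have "Comp D (\<phi> l') (Fm f) = Comp D (Gm f) (\<phi> l)" if "mwt C f l l'" for f l l'
    using that
  proof (induction rule: mwt.induct)
    case (wt_id l)
    then show ?case
      using \<phi>_hom[OF wt_id] D
      by (simp add: slist_functor_MId[OF F] slist_functor_MId[OF G]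
          category_comp_Ident_left category_comp_Ident_right)
  next
    case (wt_sw a b l)
    then show ?case by (rule \<phi>_MSw)
  next
    case (wt_cons x f l l')
    then show ?case by (rule \<phi>_MCons)
  next
    case (wt_comp f l1 l2 g l3)
    have "set l1 \<subseteq> C" "set l2 \<subseteq> C" "set l3 \<subseteq> C"
      using wt_comp.hyps mwt_set by blast+
    then show ?case
      using comp_comm_squares[OF D _ _ _ _ \<phi>_hom \<phi>_hom \<phi>_hom wt_comp.IH]
        slist_functor_hom[OF F] slist_functor_hom[OF G] wt_comp.hyps
      by (simp add: slist_functor_MComp[OF F] slist_functor_MComp[OF G])
  qed
  with \<phi>_hom show ?thesis
    unfolding is_slist_nat_trans_def by blast
qed

locale commuting_endofunctors =
  fixes C :: "'c set" and D :: "('o, 'm) category" and Fnil :: 'o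
    and \<gamma>o :: "'c \<Rightarrow> 'o \<Rightarrow> 'o" and \<gamma>m :: "'c \<Rightarrow> 'm \<Rightarrow> 'm" and \<tau> :: "'c \<Rightarrow> 'c \<Rightarrow> 'o \<Rightarrow> 'm"
  assumes category: "is_category D"
    and Fnil_Ob: "Fnil \<in> Ob D"
    and endofunctor: "c \<in> C \<Longrightarrow> is_endofunctor D (\<gamma>o c) (\<gamma>m c)"
    and \<tau>_nat_iso: "a \<in> C \<Longrightarrow> b \<in> C \<Longrightarrow>
       is_nat_iso_endo D (\<gamma>o a \<circ> \<gamma>o b) (\<gamma>m a \<circ> \<gamma>m b) (\<gamma>o b \<circ> \<gamma>o a) (\<gamma>m b \<circ> \<gamma>m a) (\<tau> a b)"
    and \<tau>_symmetric: "a \<in> C \<Longrightarrow> b \<in> C \<Longrightarrow> X \<in> Ob D \<Longrightarrow>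
       Comp D (\<tau> a b X) (\<tau> b a X) = Ident D (\<gamma>o b (\<gamma>o a X))"
    and \<tau>_braid: "a \<in> C \<Longrightarrow> b \<in> C \<Longrightarrow> c \<in> C \<Longrightarrow> X \<in> Ob D \<Longrightarrow>
       Comp D (\<tau> b c (\<gamma>o a X)) (Comp D (\<gamma>m b (\<tau> a c X)) (\<tau> a b (\<gamma>o c X))) =
       Comp D (\<gamma>m c (\<tau> a b X)) (Comp D (\<tau> a c (\<gamma>o b X)) (\<gamma>m a (\<tau> b c X)))"
begin

lemma \<tau>_hom:
  "a \<in> C \<Longrightarrow> b \<in> C \<Longrightarrow> X \<in> Ob D \<Longrightarrow> \<tau> a b X \<in> hom D (\<gamma>o a (\<gamma>o b X)) (\<gamma>o b (\<gamma>o a X))"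
  using \<tau>_nat_iso by (simp add: is_nat_iso_endo_def)

lemma \<tau>_natural:
  "a \<in> C \<Longrightarrow> b \<in> C \<Longrightarrow> f \<in> hom D X Y \<Longrightarrow>
   Comp D (\<tau> a b Y) (\<gamma>m a (\<gamma>m b f)) = Comp D (\<gamma>m b (\<gamma>m a f)) (\<tau> a b X)"
  using \<tau>_nat_iso by (auto simp: is_nat_iso_endo_def hom_def)

fun interp_ob :: "'c list \<Rightarrow> 'o" where
  "interp_ob [] = Fnil"
| "interp_ob (c # l) = \<gamma>o c (interp_ob l)"

fun interp_mor :: "'c mterm \<Rightarrow> 'm" where
  "interp_mor (MId l) = Ident D (interp_ob l)"
| "interp_mor (MSw a b l) = \<tau> a b (interp_ob l)"
| "interp_mor (MCons x f) = \<gamma>m x (interp_mor f)"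
| "interp_mor (MComp g f) = Comp D (interp_mor g) (interp_mor f)"

lemma interp_ob_Ob: "set l \<subseteq> C \<Longrightarrow> interp_ob l \<in> Ob D"
  by (induction l) (simp_all add: Fnil_Ob endofunctor_Ob[OF endofunctor])

lemma interp_mor_hom: "mwt C f l l' \<Longrightarrow> interp_mor f \<in> hom D (interp_ob l) (interp_ob l')"
  by (induction rule: mwt.induct)
    (simp_all add: category_Ident_hom category interp_ob_Ob \<tau>_hom endofunctor_hom endofunctor
      category_comp_hom)

lemma interp_mor_respects_meq: "meq C f g \<Longrightarrow> interp_mor f = interp_mor g"
proof (induction rule: meq.induct)
  case (eq_idl f l l')
  then show ?case using interp_mor_hom category_comp_Ident_left category by fastforce
next
  case (eq_idr f l l')
  then show ?case using interp_mor_hom category_comp_Ident_right category by fastforce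
next
  case (eq_assoc f l1 l2 g l3 h l4)
  then show ?case using interp_mor_hom category_comp_assoc category by fastforce
next
  case (eq_cons_id x l)
  then show ?case by (simp add: endofunctor_Ident endofunctor interp_ob_Ob)
next
  case (eq_cons_comp x f l1 l2 g l3)
  then show ?case
    by (simp add: endofunctor_comp[OF endofunctor interp_mor_hom interp_mor_hom])
next
  case (eq_sw_nat a b f l l')
  then show ?case using interp_mor_hom by (simp add: \<tau>_natural)
next
  case (eq_sw_inv a b l)
  then show ?case using \<tau>_symmetric[of b a "interp_ob l"] by (simp add: interp_ob_Ob)
next
  case (eq_ybe a b c l)
  then show ?case using \<tau>_braid[of a b c "interp_ob l"] by (simp add: interp_ob_Ob)
qed simp_all

lemma slist_functor_interp: "is_slist_functor C D interp_ob interp_mor"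
  unfolding is_slist_functor_def
  by (simp add: interp_ob_Ob interp_mor_hom interp_mor_respects_meq)

lemma interp_swap_coherence:
  assumes a: "a \<in> C" and b: "b \<in> C" and l: "set l \<subseteq> C"
  shows "Comp D (\<gamma>m b (Ident D (interp_ob (a # l))))
           (Comp D (Ident D (interp_ob (b # a # l))) (interp_mor (MSw a b l))) =
         Comp D (\<tau> a b (interp_ob l))
           (Comp D (\<gamma>m a (Ident D (interp_ob (b # l)))) (Ident D (interp_ob (a # b # l))))"
proof -
  let ?X = "interp_ob l"
  have \<tau>: "\<tau> a b ?X \<in> hom D (\<gamma>o a (\<gamma>o b ?X)) (\<gamma>o b (\<gamma>o a ?X))"
    using a b l by (simp add: \<tau>_hom interp_ob_Ob)
  have "\<gamma>m b (Ident D (interp_ob (a # l))) = Ident D (\<gamma>o b (\<gamma>o a ?X))"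
    "\<gamma>m a (Ident D (interp_ob (b # l))) = Ident D (\<gamma>o a (\<gamma>o b ?X))"
    using interp_ob_Ob[of "a # l"] interp_ob_Ob[of "b # l"] a b l
    by (simp_all add: endofunctor_Ident endofunctor)
  moreover have "\<gamma>o a (\<gamma>o b ?X) \<in> Ob D"
    using interp_ob_Ob[of "a # b # l"] a b l by simp
  ultimately show ?thesis
    using category_comp_Ident_left[OF category \<tau>] category_comp_Ident_right[OF category \<tau>]
      category_comp_Ident_left[OF category category_Ident_hom[OF category]]
    by simp
qed

lemma ex_slist_functor_lifting:
  "\<exists>(Fo :: 'c list \<Rightarrow> 'o) (Fm :: 'c mterm \<Rightarrow> 'm) (\<upsilon>nil :: 'm) (\<upsilon>cons :: 'c \<Rightarrow> 'c list \<Rightarrow> 'm).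
     is_slist_functor C D Fo Fm \<and>
     \<upsilon>nil \<in> hom D (Fo []) Fnil \<and> is_iso D \<upsilon>nil \<and>
     (\<forall>c\<in>C. (\<forall>l. set l \<subseteq> C \<longrightarrow>
                 \<upsilon>cons c l \<in> hom D (Fo (c # l)) (\<gamma>o c (Fo l)) \<and> is_iso D (\<upsilon>cons c l)) \<and>
             (\<forall>f l l'. mwt C f l l' \<longrightarrow>
                 Comp D (\<upsilon>cons c l') (Fm (MCons c f)) = Comp D (\<gamma>m c (Fm f)) (\<upsilon>cons c l))) \<and>
     (\<forall>a\<in>C. \<forall>b\<in>C. \<forall>l. set l \<subseteq> C \<longrightarrow>
        Comp D (\<gamma>m b (\<upsilon>cons a l)) (Comp D (\<upsilon>cons b (a # l)) (Fm (MSw a b l))) =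
        Comp D (\<tau> a b (Fo l)) (Comp D (\<gamma>m a (\<upsilon>cons b l)) (\<upsilon>cons a (b # l))))"
proof (intro exI conjI ballI allI impI)
  show "is_slist_functor C D interp_ob interp_mor"
    by (rule slist_functor_interp)
  show "Ident D Fnil \<in> hom D (interp_ob []) Fnil" "is_iso D (Ident D Fnil)"
    by (simp_all add: category category_Ident_hom is_iso_Ident Fnil_Ob)
  fix c l assume "c \<in> C" "set l \<subseteq> C"
  then have "interp_ob (c # l) \<in> Ob D"
    by (intro interp_ob_Ob) simp
  then show "Ident D (interp_ob (c # l)) \<in> hom D (interp_ob (c # l)) (\<gamma>o c (interp_ob l))"
    "is_iso D (Ident D (interp_ob (c # l)))"
    by (simp_all add: category category_Ident_hom is_iso_Ident)
next
  fix c f l l' assume "c \<in> C" "mwt C f l l'"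
  then have "\<gamma>m c (interp_mor f) \<in> hom D (interp_ob (c # l)) (interp_ob (c # l'))"
    by (simp add: endofunctor_hom endofunctor interp_mor_hom)
  then show "Comp D (Ident D (interp_ob (c # l'))) (interp_mor (MCons c f)) =
             Comp D (\<gamma>m c (interp_mor f)) (Ident D (interp_ob (c # l)))"
    by (simp add: category category_comp_Ident_left category_comp_Ident_right del: interp_ob.simps)
qed (rule interp_swap_coherence)

end

locale slist_nat_trans_recursion =
  fixes C :: "'c set" and D :: "('o, 'm) category"
    and Fo :: "'c list \<Rightarrow> 'o" and Fm :: "'c mterm \<Rightarrow> 'm"
    and Go :: "'c list \<Rightarrow> 'o" and Gm :: "'c mterm \<Rightarrow> 'm"
    and \<phi>nil :: 'm and \<phi>c :: "'c \<Rightarrow> 'c list \<Rightarrow> 'm \<Rightarrow> 'm"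
  assumes category: "is_category D"
    and F: "is_slist_functor C D Fo Fm" and G: "is_slist_functor C D Go Gm"
    and \<phi>nil_hom: "\<phi>nil \<in> hom D (Fo []) (Go [])"
    and \<phi>c_hom: "c \<in> C \<Longrightarrow> set l \<subseteq> C \<Longrightarrow> ind \<in> hom D (Fo l) (Go l) \<Longrightarrow>
       \<phi>c c l ind \<in> hom D (Fo (c # l)) (Go (c # l))"
    and \<phi>c_MSw: "a \<in> C \<Longrightarrow> b \<in> C \<Longrightarrow> set l \<subseteq> C \<Longrightarrow> ind \<in> hom D (Fo l) (Go l) \<Longrightarrow>
       Comp D (Gm (MSw a b l)) (\<phi>c a (b # l) (\<phi>c b l ind)) =
       Comp D (\<phi>c b (a # l) (\<phi>c a l ind)) (Fm (MSw a b l))"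
    and \<phi>c_MCons: "c \<in> C \<Longrightarrow> mwt C f l l' \<Longrightarrow>
       ind \<in> hom D (Fo l) (Go l) \<Longrightarrow> ind' \<in> hom D (Fo l') (Go l') \<Longrightarrow>
       Comp D ind' (Fm f) = Comp D (Gm f) ind \<Longrightarrow>
       Comp D (\<phi>c c l' ind') (Fm (MCons c f)) = Comp D (Gm (MCons c f)) (\<phi>c c l ind)"
begin

fun nat_rec :: "'c list \<Rightarrow> 'm" where
  "nat_rec [] = \<phi>nil"
| "nat_rec (c # l) = \<phi>c c l (nat_rec l)"

lemma nat_rec_hom: "set l \<subseteq> C \<Longrightarrow> nat_rec l \<in> hom D (Fo l) (Go l)"
  by (induction l) (simp_all add: \<phi>nil_hom \<phi>c_hom)

lemma slist_nat_trans_nat_rec: "is_slist_nat_trans C D Fo Fm Go Gm nat_rec"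
proof (rule slist_nat_trans_from_generators[OF category F G nat_rec_hom])
  fix a b l assume "a \<in> C" "b \<in> C" "set l \<subseteq> C"
  then show "Comp D (nat_rec (b # a # l)) (Fm (MSw a b l)) =
             Comp D (Gm (MSw a b l)) (nat_rec (a # b # l))"
    by (simp add: \<phi>c_MSw nat_rec_hom)
next
  fix x f l l'
  assume x: "x \<in> C" and f: "mwt C f l l'"
    and square: "Comp D (nat_rec l') (Fm f) = Comp D (Gm f) (nat_rec l)"
  have "set l \<subseteq> C" "set l' \<subseteq> C"
    using mwt_set[OF f] by auto
  then show "Comp D (nat_rec (x # l')) (Fm (MCons x f)) = Comp D (Gm (MCons x f)) (nat_rec (x # l))"
    using \<phi>c_MCons[OF x f nat_rec_hom nat_rec_hom square] by simp
qed

lemma nat_rec_unique: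
  assumes "\<psi> [] = \<phi>nil" and "\<And>c l. c \<in> C \<Longrightarrow> set l \<subseteq> C \<Longrightarrow> \<psi> (c # l) = \<phi>c c l (\<psi> l)"
  shows "set l \<subseteq> C \<Longrightarrow> \<psi> l = nat_rec l"
  by (induction l) (simp_all add: assms)

lemma ex_unique_slist_nat_trans:
  "\<exists>\<phi>. is_slist_nat_trans C D Fo Fm Go Gm \<phi> \<and> \<phi> [] = \<phi>nil \<and>
     (\<forall>c\<in>C. \<forall>l. set l \<subseteq> C \<longrightarrow> \<phi> (c # l) = \<phi>c c l (\<phi> l)) \<and>
     (\<forall>\<psi>. is_slist_nat_trans C D Fo Fm Go Gm \<psi> \<and> \<psi> [] = \<phi>nil \<and>
          (\<forall>c\<in>C. \<forall>l. set l \<subseteq> C \<longrightarrow> \<psi> (c # l) = \<phi>c c l (\<psi> l)) \<longrightarrow>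
          (\<forall>l. set l \<subseteq> C \<longrightarrow> \<psi> l = \<phi> l))"
  using slist_nat_trans_nat_rec nat_rec_unique by (intro exI[of _ nat_rec]) auto

end

theorem lemma2p3:
  fixes C :: "'c set" and D :: "('o, 'm) category"
  assumes "is_category D"
  shows
   "(\<forall>(Fnil :: 'o) (\<gamma>o :: 'c \<Rightarrow> 'o \<Rightarrow> 'o) (\<gamma>m :: 'c \<Rightarrow> 'm \<Rightarrow> 'm) (\<tau> :: 'c \<Rightarrow> 'c \<Rightarrow> 'o \<Rightarrow> 'm).
      Fnil \<in> Ob D \<longrightarrow>
      (\<forall>c\<in>C. is_endofunctor D (\<gamma>o c) (\<gamma>m c)) \<longrightarrow>
      (\<forall>a\<in>C. \<forall>b\<in>C. is_nat_iso_endo D (\<gamma>o a \<circ> \<gamma>o b) (\<gamma>m a \<circ> \<gamma>m b)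
                                     (\<gamma>o b \<circ> \<gamma>o a) (\<gamma>m b \<circ> \<gamma>m a) (\<tau> a b)) \<longrightarrow>
      (\<forall>a\<in>C. \<forall>b\<in>C. \<forall>X\<in>Ob D. Comp D (\<tau> a b X) (\<tau> b a X) = Ident D (\<gamma>o b (\<gamma>o a X))) \<longrightarrow>
      (\<forall>a\<in>C. \<forall>b\<in>C. \<forall>c\<in>C. \<forall>X\<in>Ob D.
         Comp D (\<tau> b c (\<gamma>o a X)) (Comp D (\<gamma>m b (\<tau> a c X)) (\<tau> a b (\<gamma>o c X))) =
         Comp D (\<gamma>m c (\<tau> a b X)) (Comp D (\<tau> a c (\<gamma>o b X)) (\<gamma>m a (\<tau> b c X)))) \<longrightarrow>
      (\<exists>(Fo :: 'c list \<Rightarrow> 'o) (Fm :: 'c mterm \<Rightarrow> 'm) (\<upsilon>nil :: 'm) (\<upsilon>cons :: 'c \<Rightarrow> 'c list \<Rightarrow> 'm).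
         is_slist_functor C D Fo Fm \<and>
         \<upsilon>nil \<in> hom D (Fo []) Fnil \<and> is_iso D \<upsilon>nil \<and>
         (\<forall>c\<in>C. (\<forall>l. set l \<subseteq> C \<longrightarrow>
                     \<upsilon>cons c l \<in> hom D (Fo (c # l)) (\<gamma>o c (Fo l)) \<and> is_iso D (\<upsilon>cons c l)) \<and>
                 (\<forall>f l l'. mwt C f l l' \<longrightarrow>
                     Comp D (\<upsilon>cons c l') (Fm (MCons c f)) = Comp D (\<gamma>m c (Fm f)) (\<upsilon>cons c l))) \<and>
         (\<forall>a\<in>C. \<forall>b\<in>C. \<forall>l. set l \<subseteq> C \<longrightarrow>
            Comp D (\<gamma>m b (\<upsilon>cons a l)) (Comp D (\<upsilon>cons b (a # l)) (Fm (MSw a b l))) =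
            Comp D (\<tau> a b (Fo l)) (Comp D (\<gamma>m a (\<upsilon>cons b l)) (\<upsilon>cons a (b # l))))))
   \<and>
   (\<forall>(Fo :: 'c list \<Rightarrow> 'o) (Fm :: 'c mterm \<Rightarrow> 'm) (Go :: 'c list \<Rightarrow> 'o) (Gm :: 'c mterm \<Rightarrow> 'm)
      (\<phi>nil :: 'm) (\<phi>c :: 'c \<Rightarrow> 'c list \<Rightarrow> 'm \<Rightarrow> 'm).
      is_slist_functor C D Fo Fm \<longrightarrow> is_slist_functor C D Go Gm \<longrightarrow>
      \<phi>nil \<in> hom D (Fo []) (Go []) \<longrightarrow>
      (\<forall>c\<in>C. \<forall>l ind. set l \<subseteq> C \<longrightarrow> ind \<in> hom D (Fo l) (Go l) \<longrightarrow>
          \<phi>c c l ind \<in> hom D (Fo (c # l)) (Go (c # l))) \<longrightarrow>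
      (\<forall>a\<in>C. \<forall>b\<in>C. \<forall>l ind. set l \<subseteq> C \<longrightarrow> ind \<in> hom D (Fo l) (Go l) \<longrightarrow>
          Comp D (Gm (MSw a b l)) (\<phi>c a (b # l) (\<phi>c b l ind)) =
          Comp D (\<phi>c b (a # l) (\<phi>c a l ind)) (Fm (MSw a b l))) \<longrightarrow>
      (\<forall>c\<in>C. \<forall>f l l' ind ind'. mwt C f l l' \<longrightarrow>
          ind \<in> hom D (Fo l) (Go l) \<longrightarrow> ind' \<in> hom D (Fo l') (Go l') \<longrightarrow>
          Comp D ind' (Fm f) = Comp D (Gm f) ind \<longrightarrow>
          Comp D (\<phi>c c l' ind') (Fm (MCons c f)) = Comp D (Gm (MCons c f)) (\<phi>c c l ind)) \<longrightarrow>
      (\<exists>\<phi>. is_slist_nat_trans C D Fo Fm Go Gm \<phi> \<and> \<phi> [] = \<phi>nil \<and>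
            (\<forall>c\<in>C. \<forall>l. set l \<subseteq> C \<longrightarrow> \<phi> (c # l) = \<phi>c c l (\<phi> l)) \<and>
            (\<forall>\<psi>. is_slist_nat_trans C D Fo Fm Go Gm \<psi> \<and> \<psi> [] = \<phi>nil \<and>
                 (\<forall>c\<in>C. \<forall>l. set l \<subseteq> C \<longrightarrow> \<psi> (c # l) = \<phi>c c l (\<psi> l)) \<longrightarrow>
                 (\<forall>l. set l \<subseteq> C \<longrightarrow> \<psi> l = \<phi> l))))"
proof (intro conjI allI impI, goal_cases)
  case (1 Fnil \<gamma>o \<gamma>m \<tau>)
  interpret commuting_endofunctors C D Fnil \<gamma>o \<gamma>m \<tau>
    by unfold_locales (use 1 assms in auto)
  show ?case by (rule ex_slist_functor_lifting)
next
  case (2 Fo Fm Go Gm \<phi>nil \<phi>c)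
  interpret slist_nat_trans_recursion C D Fo Fm Go Gm \<phi>nil \<phi>c
    by unfold_locales (use 2 assms in auto)
  show ?case by (rule ex_unique_slist_nat_trans)
qed

end
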